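(* Let $L$ be an IL-algebra with greatest element $\top$, and let $F$ be an affine filter of $L$. Then $L/F$, with operations $[x]\cup[y]=[x\cup y]$, $[x]\cap[y]=[x\cap y]$, $[x]\ast[y]=[x\ast y]$, $[x]\to[y]=[x\to y]$, least element $[\bot]$ and unit $[1]$, is a residuated lattice.
   Context: An IL-algebra is a structure $(L,\cup,\cap,\bot,\to,\ast,1)$ such that $(L,\cup,\cap,\bot)$ is a lattice with least element $\bot$, $(L,\ast,1)$ is a commutative monoid with unit $1$, and for all $x,y,z\in L$: $x\ast y\leq z$ iff $x\leq y\to z$; it has a greatest element $\top=\bot\to\bot$. A filter of $L$ is a non-empty $F\subseteq L$ with $1\in F$, such that $x,y\in F$ implies $x\ast y\in F$ and $x\cap y\in F$, and $x\in F$, $x\leq y$ implies $y\in F$. A filter $F$ is affine if $\top\to1\in F$. For a filter $F$, $x\,\rho_F\,y$ iff $x\to y\in F$ and $y\to x\in F$; $[x]$ is the $\rho_F$-class of $x$ and $L/F=\{[x]:x\in L\}$. A residuated lattice is a structure $(L,\cup,\cap,0,\to,\ast,1)$ such that $(L,\cup,\cap,0,1)$ is a bounded lattice with least element $0$ and greatest element $1$, $(L,\ast,1)$ is a commutative monoid, and $x\ast y\leq z$ iff $x\leq y\to z$ for all $x,y,z$. *)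

theory Defs
  imports Main
begin

definition lat_le :: "('a \<Rightarrow> 'a \<Rightarrow> 'a) \<Rightarrow> 'a \<Rightarrow> 'a \<Rightarrow> bool" where
  "lat_le meet x y \<longleftrightarrow> meet x y = x"

definition is_lattice :: "'a set \<Rightarrow> ('a \<Rightarrow> 'a \<Rightarrow> 'a) \<Rightarrow> ('a \<Rightarrow> 'a \<Rightarrow> 'a) \<Rightarrow> bool" where
  "is_lattice L join meet \<longleftrightarrow>
     (\<forall>x\<in>L. \<forall>y\<in>L. join x y \<in> L \<and> meet x y \<in> L) \<and>
     (\<forall>x\<in>L. \<forall>y\<in>L. join x y = join y x \<and> meet x y = meet y x) \<and>
     (\<forall>x\<in>L. \<forall>y\<in>L. \<forall>z\<in>L. join (join x y) z = join x (join y z) \<and>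
                           meet (meet x y) z = meet x (meet y z)) \<and>
     (\<forall>x\<in>L. \<forall>y\<in>L. join x (meet x y) = x \<and> meet x (join x y) = x)"

definition is_comm_monoid :: "'a set \<Rightarrow> ('a \<Rightarrow> 'a \<Rightarrow> 'a) \<Rightarrow> 'a \<Rightarrow> bool" where
  "is_comm_monoid L mult e \<longleftrightarrow>
     e \<in> L \<and>
     (\<forall>x\<in>L. \<forall>y\<in>L. mult x y \<in> L) \<and>
     (\<forall>x\<in>L. \<forall>y\<in>L. \<forall>z\<in>L. mult (mult x y) z = mult x (mult y z)) \<and>
     (\<forall>x\<in>L. \<forall>y\<in>L. mult x y = mult y x) \<and>
     (\<forall>x\<in>L. mult x e = x)"

definition residuated :: "'a set \<Rightarrow> ('a \<Rightarrow> 'a \<Rightarrow> 'a) \<Rightarrow> ('a \<Rightarrow> 'a \<Rightarrow> 'a) \<Rightarrow> ('a \<Rightarrow> 'a \<Rightarrow> 'a) \<Rightarrow> bool" where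
  "residuated L meet imp mult \<longleftrightarrow>
     (\<forall>x\<in>L. \<forall>y\<in>L. imp x y \<in> L) \<and>
     (\<forall>x\<in>L. \<forall>y\<in>L. \<forall>z\<in>L. lat_le meet (mult x y) z \<longleftrightarrow> lat_le meet x (imp y z))"

definition IL_algebra :: "'a set \<Rightarrow> ('a \<Rightarrow> 'a \<Rightarrow> 'a) \<Rightarrow> ('a \<Rightarrow> 'a \<Rightarrow> 'a) \<Rightarrow> 'a \<Rightarrow>
    ('a \<Rightarrow> 'a \<Rightarrow> 'a) \<Rightarrow> ('a \<Rightarrow> 'a \<Rightarrow> 'a) \<Rightarrow> 'a \<Rightarrow> bool" where
  "IL_algebra L join meet bt imp mult e \<longleftrightarrow>
     is_lattice L join meet \<and>
     bt \<in> L \<and> (\<forall>x\<in>L. lat_le meet bt x) \<and>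
     is_comm_monoid L mult e \<and>
     residuated L meet imp mult"

definition residuated_lattice :: "'a set \<Rightarrow> ('a \<Rightarrow> 'a \<Rightarrow> 'a) \<Rightarrow> ('a \<Rightarrow> 'a \<Rightarrow> 'a) \<Rightarrow> 'a \<Rightarrow>
    ('a \<Rightarrow> 'a \<Rightarrow> 'a) \<Rightarrow> ('a \<Rightarrow> 'a \<Rightarrow> 'a) \<Rightarrow> 'a \<Rightarrow> bool" where
  "residuated_lattice L join meet z0 imp mult e \<longleftrightarrow>
     is_lattice L join meet \<and>
     z0 \<in> L \<and> (\<forall>x\<in>L. lat_le meet z0 x) \<and>
     e \<in> L \<and> (\<forall>x\<in>L. lat_le meet x e) \<and>
     is_comm_monoid L mult e \<and>
     residuated L meet imp mult"

definition IL_filter :: "'a set \<Rightarrow> ('a \<Rightarrow> 'a \<Rightarrow> 'a) \<Rightarrow> ('a \<Rightarrow> 'a \<Rightarrow> 'a) \<Rightarrow> 'a \<Rightarrow> 'a set \<Rightarrow> bool" where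
  "IL_filter L meet mult e F \<longleftrightarrow>
     F \<subseteq> L \<and> F \<noteq> {} \<and> e \<in> F \<and>
     (\<forall>x\<in>F. \<forall>y\<in>F. mult x y \<in> F \<and> meet x y \<in> F) \<and>
     (\<forall>x\<in>F. \<forall>y\<in>L. lat_le meet x y \<longrightarrow> y \<in> F)"

text \<open>Affine filter: top \<rightarrow> 1 \<in> F, where top = bt \<rightarrow> bt.\<close>
definition affine_filter :: "'a set \<Rightarrow> ('a \<Rightarrow> 'a \<Rightarrow> 'a) \<Rightarrow> 'a \<Rightarrow> ('a \<Rightarrow> 'a \<Rightarrow> 'a) \<Rightarrow>
    ('a \<Rightarrow> 'a \<Rightarrow> 'a) \<Rightarrow> 'a \<Rightarrow> 'a set \<Rightarrow> bool" where
  "affine_filter L meet bt imp mult e F \<longleftrightarrow>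
     IL_filter L meet mult e F \<and> imp (imp bt bt) e \<in> F"

definition fclass :: "'a set \<Rightarrow> ('a \<Rightarrow> 'a \<Rightarrow> 'a) \<Rightarrow> 'a set \<Rightarrow> 'a \<Rightarrow> 'a set" where
  "fclass L imp F x = {y\<in>L. imp x y \<in> F \<and> imp y x \<in> F}"

definition quot :: "'a set \<Rightarrow> ('a \<Rightarrow> 'a \<Rightarrow> 'a) \<Rightarrow> 'a set \<Rightarrow> 'a set set" where
  "quot L imp F = fclass L imp F ` L"

text \<open>Operation on classes induced by an operation on representatives
  (via a chosen representative; the theorem states independence of representatives).\<close>
definition qop :: "'a set \<Rightarrow> ('a \<Rightarrow> 'a \<Rightarrow> 'a) \<Rightarrow> 'a set \<Rightarrow> ('a \<Rightarrow> 'a \<Rightarrow> 'a) \<Rightarrow>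
    'a set \<Rightarrow> 'a set \<Rightarrow> 'a set" where
  "qop L imp F f A B = fclass L imp F (f (SOME a. a \<in> A) (SOME b. b \<in> B))"

end

theory Submission
  imports Defs
begin

text \<open>The relation \<open>x \<rho> y \<longleftrightarrow> x \<rightarrow> y \<in> F \<and> y \<rightarrow> x \<in> F\<close> is transitive because
  \<open>(x \<rightarrow> y) \<odot> (y \<rightarrow> z) \<le> x \<rightarrow> z\<close> and \<open>F\<close> is closed under \<open>\<odot>\<close> and upwards.
  Every operation is monotone modulo \<open>F\<close> (implication antitone in its first argument): if
  \<open>x \<rightarrow> x'\<close> and \<open>y \<rightarrow> y'\<close> lie in \<open>F\<close>, a product or meet \<open>w \<in> F\<close> of these witnesses satisfies
  e.g. \<open>w \<odot> (x \<squnion> y) \<le> x' \<squnion> y'\<close>, hence \<open>(x \<squnion> y) \<rightarrow> (x' \<squnion> y') \<in> F\<close>.  So \<open>\<rho>\<close> is a congruence and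
  \<open>L/F\<close> inherits all equational laws.  Its order is \<open>[x] \<le> [y] \<longleftrightarrow> x \<rightarrow> y \<in> F\<close>, so
  residuation transfers through \<open>x \<odot> y \<rightarrow> z = x \<rightarrow> (y \<rightarrow> z)\<close> and \<open>[\<bottom>]\<close> is least; \<open>[1]\<close> is
  greatest because affinity, \<open>\<top> \<rightarrow> 1 \<in> F\<close>, yields \<open>x \<rightarrow> 1 \<in> F\<close> for every \<open>x \<le> \<top>\<close>.\<close>

locale il_algebra =
  fixes L :: "'a set"
    and join :: "'a \<Rightarrow> 'a \<Rightarrow> 'a"  (infixl \<open>\<squnion>\<close> 65)
    and meet :: "'a \<Rightarrow> 'a \<Rightarrow> 'a"  (infixl \<open>\<sqinter>\<close> 70)
    and bt :: 'a
    and imp :: "'a \<Rightarrow> 'a \<Rightarrow> 'a"  (infixr \<open>\<rightarrow>\<close> 60)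
    and mult :: "'a \<Rightarrow> 'a \<Rightarrow> 'a"  (infixl \<open>\<odot>\<close> 70)
    and e :: 'a
  assumes IL_algebra: "IL_algebra L (\<squnion>) (\<sqinter>) bt (\<rightarrow>) (\<odot>) e"
begin

abbreviation le :: "'a \<Rightarrow> 'a \<Rightarrow> bool"  (infix \<open>\<preceq>\<close> 50) where
  "x \<preceq> y \<equiv> lat_le (\<sqinter>) x y"

lemma closed [simp]:
  "x \<in> L \<Longrightarrow> y \<in> L \<Longrightarrow> x \<squnion> y \<in> L"
  "x \<in> L \<Longrightarrow> y \<in> L \<Longrightarrow> x \<sqinter> y \<in> L"
  "x \<in> L \<Longrightarrow> y \<in> L \<Longrightarrow> x \<rightarrow> y \<in> L"
  "x \<in> L \<Longrightarrow> y \<in> L \<Longrightarrow> x \<odot> y \<in> L"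
  "bt \<in> L" "e \<in> L"
  using IL_algebra
  unfolding IL_algebra_def is_lattice_def is_comm_monoid_def residuated_def by auto

lemma
  shows join_commute: "x \<in> L \<Longrightarrow> y \<in> L \<Longrightarrow> x \<squnion> y = y \<squnion> x"
    and meet_commute: "x \<in> L \<Longrightarrow> y \<in> L \<Longrightarrow> x \<sqinter> y = y \<sqinter> x"
    and join_assoc: "x \<in> L \<Longrightarrow> y \<in> L \<Longrightarrow> z \<in> L \<Longrightarrow> x \<squnion> y \<squnion> z = x \<squnion> (y \<squnion> z)"
    and meet_assoc: "x \<in> L \<Longrightarrow> y \<in> L \<Longrightarrow> z \<in> L \<Longrightarrow> x \<sqinter> y \<sqinter> z = x \<sqinter> (y \<sqinter> z)"
    and join_meet_absorb: "x \<in> L \<Longrightarrow> y \<in> L \<Longrightarrow> x \<squnion> (x \<sqinter> y) = x"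
    and meet_join_absorb: "x \<in> L \<Longrightarrow> y \<in> L \<Longrightarrow> x \<sqinter> (x \<squnion> y) = x"
    and bot_least: "x \<in> L \<Longrightarrow> bt \<preceq> x"
    and mult_commute: "x \<in> L \<Longrightarrow> y \<in> L \<Longrightarrow> x \<odot> y = y \<odot> x"
    and mult_assoc: "x \<in> L \<Longrightarrow> y \<in> L \<Longrightarrow> z \<in> L \<Longrightarrow> x \<odot> y \<odot> z = x \<odot> (y \<odot> z)"
    and mult_unit_right: "x \<in> L \<Longrightarrow> x \<odot> e = x"
    and residuation: "x \<in> L \<Longrightarrow> y \<in> L \<Longrightarrow> z \<in> L \<Longrightarrow> x \<odot> y \<preceq> z \<longleftrightarrow> x \<preceq> y \<rightarrow> z"
  using IL_algebra
  unfolding IL_algebra_def is_lattice_def is_comm_monoid_def residuated_def by auto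

lemma meet_idem: "x \<in> L \<Longrightarrow> x \<sqinter> x = x"
  by (metis closed(2) join_meet_absorb meet_join_absorb)

lemma lat_le_refl: "x \<in> L \<Longrightarrow> x \<preceq> x"
  by (simp add: lat_le_def meet_idem)

lemma lat_le_trans: "x \<in> L \<Longrightarrow> y \<in> L \<Longrightarrow> z \<in> L \<Longrightarrow> x \<preceq> y \<Longrightarrow> y \<preceq> z \<Longrightarrow> x \<preceq> z"
  unfolding lat_le_def by (metis meet_assoc)

lemma lat_le_antisym: "x \<in> L \<Longrightarrow> y \<in> L \<Longrightarrow> x \<preceq> y \<Longrightarrow> y \<preceq> x \<Longrightarrow> x = y"
  unfolding lat_le_def by (metis meet_commute)

lemma meet_le1: "x \<in> L \<Longrightarrow> y \<in> L \<Longrightarrow> x \<sqinter> y \<preceq> x"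
  unfolding lat_le_def by (metis closed(2) meet_assoc meet_commute meet_idem)

lemma meet_le2: "x \<in> L \<Longrightarrow> y \<in> L \<Longrightarrow> x \<sqinter> y \<preceq> y"
  unfolding lat_le_def by (metis meet_assoc meet_idem)

lemma le_meet_iff: "x \<in> L \<Longrightarrow> y \<in> L \<Longrightarrow> z \<in> L \<Longrightarrow> z \<preceq> x \<sqinter> y \<longleftrightarrow> z \<preceq> x \<and> z \<preceq> y"
  by (metis closed(2) lat_le_def lat_le_trans meet_assoc meet_le1 meet_le2)

lemma le_iff_join: "x \<in> L \<Longrightarrow> y \<in> L \<Longrightarrow> x \<preceq> y \<longleftrightarrow> x \<squnion> y = y"
  unfolding lat_le_def by (metis join_commute join_meet_absorb meet_commute meet_join_absorb)

lemma join_ge1: "x \<in> L \<Longrightarrow> y \<in> L \<Longrightarrow> x \<preceq> x \<squnion> y"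
  by (simp add: lat_le_def meet_join_absorb)

lemma join_ge2: "x \<in> L \<Longrightarrow> y \<in> L \<Longrightarrow> y \<preceq> x \<squnion> y"
  by (metis join_commute join_ge1)

lemma join_least: "x \<in> L \<Longrightarrow> y \<in> L \<Longrightarrow> z \<in> L \<Longrightarrow> x \<preceq> z \<Longrightarrow> y \<preceq> z \<Longrightarrow> x \<squnion> y \<preceq> z"
  by (metis closed(1) join_assoc le_iff_join)

lemma mult_unit_left: "x \<in> L \<Longrightarrow> e \<odot> x = x"
  by (metis closed(6) mult_commute mult_unit_right)

lemma mult_left_commute: "x \<in> L \<Longrightarrow> y \<in> L \<Longrightarrow> z \<in> L \<Longrightarrow> x \<odot> (y \<odot> z) = y \<odot> (x \<odot> z)"
  by (metis mult_assoc mult_commute)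

lemmas mult_ac = mult_assoc mult_commute mult_left_commute

lemma residuation_commute: "x \<in> L \<Longrightarrow> y \<in> L \<Longrightarrow> z \<in> L \<Longrightarrow> x \<odot> y \<preceq> z \<longleftrightarrow> y \<preceq> x \<rightarrow> z"
  by (metis mult_commute residuation)

lemma modus_ponens: "x \<in> L \<Longrightarrow> y \<in> L \<Longrightarrow> (x \<rightarrow> y) \<odot> x \<preceq> y"
  by (simp add: lat_le_refl residuation)

lemma mult_mono_left:
  assumes "x \<in> L" "x' \<in> L" "y \<in> L" "x \<preceq> x'"
  shows "x \<odot> y \<preceq> x' \<odot> y"
proof -
  have "x' \<preceq> y \<rightarrow> x' \<odot> y"
    using assms residuation[of x' y "x' \<odot> y"] by (simp add: lat_le_refl)
  then have "x \<preceq> y \<rightarrow> x' \<odot> y"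
    using assms lat_le_trans[of x x' "y \<rightarrow> x' \<odot> y"] by simp
  then show ?thesis
    using assms residuation by simp
qed

lemma mult_mono:
  assumes "x \<in> L" "x' \<in> L" "y \<in> L" "y' \<in> L" "x \<preceq> x'" "y \<preceq> y'"
  shows "x \<odot> y \<preceq> x' \<odot> y'"
proof -
  have "x \<odot> y \<preceq> x' \<odot> y"
    using assms by (simp add: mult_mono_left)
  moreover have "y \<odot> x' \<preceq> y' \<odot> x'"
    using assms by (simp add: mult_mono_left)
  then have "x' \<odot> y \<preceq> x' \<odot> y'"
    using assms by (simp add: mult_commute)
  ultimately show ?thesis
    using assms lat_le_trans[of "x \<odot> y" "x' \<odot> y" "x' \<odot> y'"] by simp
qed

lemma mult_join_le:
  "w \<in> L \<Longrightarrow> x \<in> L \<Longrightarrow> y \<in> L \<Longrightarrow> z \<in> L \<Longrightarrow> w \<odot> x \<preceq> z \<Longrightarrow> w \<odot> y \<preceq> z \<Longrightarrow> w \<odot> (x \<squnion> y) \<preceq> z"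
  by (simp add: join_least residuation_commute)

lemma imp_comp_le:
  assumes "x \<in> L" "y \<in> L" "z \<in> L"
  shows "(x \<rightarrow> y) \<odot> (y \<rightarrow> z) \<preceq> x \<rightarrow> z"
proof -
  have "(x \<rightarrow> y) \<odot> (y \<rightarrow> z) \<odot> x = (y \<rightarrow> z) \<odot> ((x \<rightarrow> y) \<odot> x)"
    using assms by (simp add: mult_ac)
  moreover have "(y \<rightarrow> z) \<odot> ((x \<rightarrow> y) \<odot> x) \<preceq> (y \<rightarrow> z) \<odot> y"
    using assms by (simp add: mult_mono lat_le_refl modus_ponens)
  moreover have "(y \<rightarrow> z) \<odot> y \<preceq> z"
    using assms by (simp add: modus_ponens)
  ultimately have "(x \<rightarrow> y) \<odot> (y \<rightarrow> z) \<odot> x \<preceq> z"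
    using assms by (metis closed(3,4) lat_le_trans)
  then show ?thesis using assms by (simp add: residuation)
qed

lemma imp_curry:
  assumes "x \<in> L" "y \<in> L" "z \<in> L"
  shows "x \<odot> y \<rightarrow> z = x \<rightarrow> y \<rightarrow> z"
proof -
  have "w \<preceq> x \<odot> y \<rightarrow> z \<longleftrightarrow> w \<preceq> x \<rightarrow> y \<rightarrow> z" if "w \<in> L" for w
  proof -
    have "w \<preceq> x \<odot> y \<rightarrow> z \<longleftrightarrow> w \<odot> (x \<odot> y) \<preceq> z"
      using that assms residuation[of w "x \<odot> y" z] by simp
    also have "\<dots> \<longleftrightarrow> w \<odot> x \<preceq> y \<rightarrow> z"
      using that assms residuation[of "w \<odot> x" y z] by (simp add: mult_assoc)
    also have "\<dots> \<longleftrightarrow> w \<preceq> x \<rightarrow> y \<rightarrow> z"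
      using that assms residuation[of w x "y \<rightarrow> z"] by simp
    finally show ?thesis .
  qed
  then show ?thesis using assms by (meson closed lat_le_antisym lat_le_refl)
qed

lemma le_top: "x \<in> L \<Longrightarrow> x \<preceq> bt \<rightarrow> bt"
  by (metis closed(3,5) bot_least residuation residuation_commute)

end

locale il_filter = il_algebra +
  fixes F :: "'a set"
  assumes IL_filter: "IL_filter L (\<sqinter>) (\<odot>) e F"
begin

lemma
  shows filter_subset: "F \<subseteq> L"
    and unit_in_filter: "e \<in> F"
    and filter_mult_closed: "x \<in> F \<Longrightarrow> y \<in> F \<Longrightarrow> x \<odot> y \<in> F"
    and filter_meet_closed: "x \<in> F \<Longrightarrow> y \<in> F \<Longrightarrow> x \<sqinter> y \<in> F"
    and filter_upward_closed: "x \<in> F \<Longrightarrow> y \<in> L \<Longrightarrow> x \<preceq> y \<Longrightarrow> y \<in> F"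
  using IL_filter unfolding IL_filter_def by auto

lemma imp_in_filter_if_mult_le:
  "w \<in> F \<Longrightarrow> x \<in> L \<Longrightarrow> y \<in> L \<Longrightarrow> w \<odot> x \<preceq> y \<Longrightarrow> x \<rightarrow> y \<in> F"
  by (meson closed(3) filter_subset filter_upward_closed residuation subsetD)

lemma imp_in_filter_if_le: "x \<in> L \<Longrightarrow> y \<in> L \<Longrightarrow> x \<preceq> y \<Longrightarrow> x \<rightarrow> y \<in> F"
  by (metis imp_in_filter_if_mult_le mult_unit_left unit_in_filter)

lemma imp_in_filter_trans:
  "x \<in> L \<Longrightarrow> y \<in> L \<Longrightarrow> z \<in> L \<Longrightarrow> x \<rightarrow> y \<in> F \<Longrightarrow> y \<rightarrow> z \<in> F \<Longrightarrow> x \<rightarrow> z \<in> F"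
  by (meson closed(3,4) filter_mult_closed filter_upward_closed imp_comp_le)

lemma join_imp_in_filter:
  assumes "x \<in> L" "y \<in> L" "x' \<in> L" "y' \<in> L" "x \<rightarrow> x' \<in> F" "y \<rightarrow> y' \<in> F"
  shows "x \<squnion> y \<rightarrow> x' \<squnion> y' \<in> F"
proof -
  let ?w = "(x \<rightarrow> x') \<sqinter> (y \<rightarrow> y')"
  have "?w \<odot> x \<preceq> x'"
    using assms by (simp add: residuation meet_le1)
  then have "?w \<odot> x \<preceq> x' \<squnion> y'"
    using assms join_ge1 lat_le_trans[of "?w \<odot> x" x' "x' \<squnion> y'"] by simp
  moreover have "?w \<odot> y \<preceq> y'"
    using assms by (simp add: residuation meet_le2)
  then have "?w \<odot> y \<preceq> x' \<squnion> y'"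
    using assms join_ge2 lat_le_trans[of "?w \<odot> y" y' "x' \<squnion> y'"] by simp
  ultimately have "?w \<odot> (x \<squnion> y) \<preceq> x' \<squnion> y'"
    using assms by (simp add: mult_join_le)
  then show ?thesis
    by (rule imp_in_filter_if_mult_le[rotated 3]) (use assms filter_meet_closed in auto)
qed

lemma meet_imp_in_filter:
  assumes "x \<in> L" "y \<in> L" "x' \<in> L" "y' \<in> L" "x \<rightarrow> x' \<in> F" "y \<rightarrow> y' \<in> F"
  shows "x \<sqinter> y \<rightarrow> x' \<sqinter> y' \<in> F"
proof -
  let ?w = "(x \<rightarrow> x') \<sqinter> (y \<rightarrow> y')"
  have "?w \<odot> (x \<sqinter> y) \<preceq> (x \<rightarrow> x') \<odot> x"
    using assms by (simp add: mult_mono meet_le1)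
  then have "?w \<odot> (x \<sqinter> y) \<preceq> x'"
    using assms modus_ponens lat_le_trans[of "?w \<odot> (x \<sqinter> y)" "(x \<rightarrow> x') \<odot> x" x'] by simp
  moreover have "?w \<odot> (x \<sqinter> y) \<preceq> (y \<rightarrow> y') \<odot> y"
    using assms by (simp add: mult_mono meet_le2)
  then have "?w \<odot> (x \<sqinter> y) \<preceq> y'"
    using assms modus_ponens lat_le_trans[of "?w \<odot> (x \<sqinter> y)" "(y \<rightarrow> y') \<odot> y" y'] by simp
  ultimately have "?w \<odot> (x \<sqinter> y) \<preceq> x' \<sqinter> y'"
    using assms by (simp add: le_meet_iff)
  then show ?thesis
    by (rule imp_in_filter_if_mult_le[rotated 3]) (use assms filter_meet_closed in auto)
qed

lemma mult_imp_in_filter: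
  assumes "x \<in> L" "y \<in> L" "x' \<in> L" "y' \<in> L" "x \<rightarrow> x' \<in> F" "y \<rightarrow> y' \<in> F"
  shows "x \<odot> y \<rightarrow> x' \<odot> y' \<in> F"
proof -
  let ?w = "(x \<rightarrow> x') \<odot> (y \<rightarrow> y')"
  have "?w \<odot> (x \<odot> y) = ((x \<rightarrow> x') \<odot> x) \<odot> ((y \<rightarrow> y') \<odot> y)"
    using assms by (simp add: mult_ac)
  also have "\<dots> \<preceq> x' \<odot> y'"
    using assms by (simp add: mult_mono modus_ponens)
  finally show ?thesis
    by (rule imp_in_filter_if_mult_le[rotated 3]) (use assms filter_mult_closed in auto)
qed

lemma imp_imp_in_filter:
  assumes "x \<in> L" "y \<in> L" "x' \<in> L" "y' \<in> L" "x' \<rightarrow> x \<in> F" "y \<rightarrow> y' \<in> F"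
  shows "(x \<rightarrow> y) \<rightarrow> (x' \<rightarrow> y') \<in> F"
proof -
  let ?w = "(x' \<rightarrow> x) \<odot> (y \<rightarrow> y')"
  have "?w \<odot> (x \<rightarrow> y) = (x' \<rightarrow> x) \<odot> (x \<rightarrow> y) \<odot> (y \<rightarrow> y')"
    using assms by (simp add: mult_ac)
  moreover have "(x' \<rightarrow> x) \<odot> (x \<rightarrow> y) \<odot> (y \<rightarrow> y') \<preceq> (x' \<rightarrow> y) \<odot> (y \<rightarrow> y')"
    using assms by (simp add: mult_mono imp_comp_le lat_le_refl)
  moreover have "(x' \<rightarrow> y) \<odot> (y \<rightarrow> y') \<preceq> x' \<rightarrow> y'"
    using assms by (simp add: imp_comp_le)
  ultimately have "?w \<odot> (x \<rightarrow> y) \<preceq> x' \<rightarrow> y'"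
    using assms by (metis closed(3,4) lat_le_trans)
  then show ?thesis
    by (rule imp_in_filter_if_mult_le[rotated 3]) (use assms filter_mult_closed in auto)
qed

definition filter_congruence :: "('a \<times> 'a) set" where
  "filter_congruence = {(x, y) \<in> L \<times> L. x \<rightarrow> y \<in> F \<and> y \<rightarrow> x \<in> F}"

abbreviation cls :: "'a \<Rightarrow> 'a set" where
  "cls \<equiv> fclass L (\<rightarrow>) F"

abbreviation lift :: "('a \<Rightarrow> 'a \<Rightarrow> 'a) \<Rightarrow> 'a set \<Rightarrow> 'a set \<Rightarrow> 'a set" where
  "lift \<equiv> qop L (\<rightarrow>) F"

lemma equiv_filter_congruence: "equiv L filter_congruence"
  unfolding equiv_def refl_on_def sym_def trans_def filter_congruence_def
  by (blast intro: imp_in_filter_if_le lat_le_refl imp_in_filter_trans)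

lemma fclass_eq_Image: "x \<in> L \<Longrightarrow> cls x = filter_congruence `` {x}"
  unfolding fclass_def filter_congruence_def by auto

lemma fclass_eq_iff: "x \<in> L \<Longrightarrow> y \<in> L \<Longrightarrow> cls x = cls y \<longleftrightarrow> (x, y) \<in> filter_congruence"
  by (simp add: fclass_eq_Image eq_equiv_class_iff[OF equiv_filter_congruence])

lemma lift_fclass:
  assumes respects: "\<And>x x' y y'. (x, x') \<in> filter_congruence \<Longrightarrow> (y, y') \<in> filter_congruence
      \<Longrightarrow> (f x y, f x' y') \<in> filter_congruence"
    and "x \<in> L" "y \<in> L"
  shows "lift f (cls x) (cls y) = cls (f x y)"
proof -
  define a where "a = (SOME a. a \<in> cls x)"
  define b where "b = (SOME b. b \<in> cls y)"
  have "x \<in> cls x" "y \<in> cls y"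
    using assms by (simp_all add: fclass_def imp_in_filter_if_le lat_le_refl)
  then have "a \<in> cls x" "b \<in> cls y"
    unfolding a_def b_def by (auto intro: someI)
  then have "(x, a) \<in> filter_congruence" "(y, b) \<in> filter_congruence"
    using assms by (simp_all add: fclass_eq_Image)
  then have "(f x y, f a b) \<in> filter_congruence"
    by (rule respects)
  moreover have "f x y \<in> L" "f a b \<in> L"
    using calculation unfolding filter_congruence_def by auto
  ultimately have "cls (f x y) = cls (f a b)"
    by (simp add: fclass_eq_iff)
  then show ?thesis
    unfolding qop_def a_def[symmetric] b_def[symmetric] by simp
qed

lemma lift_join: "x \<in> L \<Longrightarrow> y \<in> L \<Longrightarrow> lift (\<squnion>) (cls x) (cls y) = cls (x \<squnion> y)"
  by (rule lift_fclass) (auto simp: filter_congruence_def join_imp_in_filter)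

lemma lift_meet: "x \<in> L \<Longrightarrow> y \<in> L \<Longrightarrow> lift (\<sqinter>) (cls x) (cls y) = cls (x \<sqinter> y)"
  by (rule lift_fclass) (auto simp: filter_congruence_def meet_imp_in_filter)

lemma lift_mult: "x \<in> L \<Longrightarrow> y \<in> L \<Longrightarrow> lift (\<odot>) (cls x) (cls y) = cls (x \<odot> y)"
  by (rule lift_fclass) (auto simp: filter_congruence_def mult_imp_in_filter)

lemma lift_imp: "x \<in> L \<Longrightarrow> y \<in> L \<Longrightarrow> lift (\<rightarrow>) (cls x) (cls y) = cls (x \<rightarrow> y)"
  by (rule lift_fclass) (auto simp: filter_congruence_def imp_imp_in_filter)

lemma lift_meet_le_iff:
  assumes "x \<in> L" "y \<in> L"
  shows "lat_le (lift (\<sqinter>)) (cls x) (cls y) \<longleftrightarrow> x \<rightarrow> y \<in> F"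
proof -
  have "x \<sqinter> y \<rightarrow> x \<in> F"
    using assms by (simp add: imp_in_filter_if_le meet_le1)
  then have "lat_le (lift (\<sqinter>)) (cls x) (cls y) \<longleftrightarrow> x \<rightarrow> x \<sqinter> y \<in> F"
    using assms by (auto simp: lat_le_def lift_meet fclass_eq_iff filter_congruence_def)
  also have "\<dots> \<longleftrightarrow> x \<rightarrow> y \<in> F"
  proof
    assume "x \<rightarrow> x \<sqinter> y \<in> F"
    then show "x \<rightarrow> y \<in> F"
      using assms by (meson closed(2) imp_in_filter_if_le imp_in_filter_trans meet_le2)
  next
    assume "x \<rightarrow> y \<in> F"
    then have "x \<sqinter> x \<rightarrow> x \<sqinter> y \<in> F"
      using assms by (simp add: meet_imp_in_filter imp_in_filter_if_le lat_le_refl)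
    then show "x \<rightarrow> x \<sqinter> y \<in> F"
      using assms by (simp add: meet_idem)
  qed
  finally show ?thesis .
qed

abbreviation Q :: "'a set set" where
  "Q \<equiv> quot L (\<rightarrow>) F"

lemma ball_quot: "(\<forall>A\<in>Q. P A) \<longleftrightarrow> (\<forall>x\<in>L. P (cls x))"
  unfolding quot_def by blast

lemma fclass_in_quot: "x \<in> L \<Longrightarrow> cls x \<in> Q"
  unfolding quot_def by blast

lemma quot_is_lattice: "is_lattice Q (lift (\<squnion>)) (lift (\<sqinter>))"
proof -
  have "\<forall>x\<in>L. \<forall>y\<in>L. cls (x \<squnion> y) = cls (y \<squnion> x) \<and> cls (x \<sqinter> y) = cls (y \<sqinter> x)"
    using join_commute meet_commute by simp
  moreover have "\<forall>x\<in>L. \<forall>y\<in>L. \<forall>z\<in>L.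
      cls (x \<squnion> y \<squnion> z) = cls (x \<squnion> (y \<squnion> z)) \<and> cls (x \<sqinter> y \<sqinter> z) = cls (x \<sqinter> (y \<sqinter> z))"
    using join_assoc meet_assoc by simp
  moreover have "\<forall>x\<in>L. \<forall>y\<in>L. cls (x \<squnion> (x \<sqinter> y)) = cls x \<and> cls (x \<sqinter> (x \<squnion> y)) = cls x"
    using join_meet_absorb meet_join_absorb by simp
  ultimately show ?thesis
    unfolding is_lattice_def ball_quot by (simp add: lift_join lift_meet fclass_in_quot)
qed

lemma quot_bot_least: "\<forall>A\<in>Q. lat_le (lift (\<sqinter>)) (cls bt) A"
  unfolding ball_quot by (simp add: lift_meet_le_iff imp_in_filter_if_le bot_least)

lemma quot_comm_monoid: "is_comm_monoid Q (lift (\<odot>)) (cls e)"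
proof -
  have "\<forall>x\<in>L. \<forall>y\<in>L. \<forall>z\<in>L. cls (x \<odot> y \<odot> z) = cls (x \<odot> (y \<odot> z))"
    using mult_assoc by simp
  moreover have "\<forall>x\<in>L. \<forall>y\<in>L. cls (x \<odot> y) = cls (y \<odot> x)"
    using mult_commute by simp
  ultimately show ?thesis
    unfolding is_comm_monoid_def ball_quot by (simp add: lift_mult fclass_in_quot mult_unit_right)
qed

lemma quot_residuated: "residuated Q (lift (\<sqinter>)) (lift (\<rightarrow>)) (lift (\<odot>))"
  unfolding residuated_def ball_quot
  by (simp add: lift_mult lift_imp fclass_in_quot lift_meet_le_iff imp_curry)

lemma quot_unit_greatest:
  assumes "(bt \<rightarrow> bt) \<rightarrow> e \<in> F"
  shows "\<forall>A\<in>Q. lat_le (lift (\<sqinter>)) A (cls e)"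
  unfolding ball_quot using assms
  by (simp add: lift_meet_le_iff) (meson closed imp_in_filter_if_le imp_in_filter_trans le_top)

end

theorem mainTheorem12:
  fixes L :: "'a set" and F :: "'a set"
    and join meet imp mult :: "'a \<Rightarrow> 'a \<Rightarrow> 'a" and bt e :: 'a
  assumes "IL_algebra L join meet bt imp mult e"
    and "affine_filter L meet bt imp mult e F"
  shows "(\<forall>x\<in>L. \<forall>y\<in>L.
            qop L imp F join (fclass L imp F x) (fclass L imp F y) = fclass L imp F (join x y) \<and>
            qop L imp F meet (fclass L imp F x) (fclass L imp F y) = fclass L imp F (meet x y) \<and>
            qop L imp F mult (fclass L imp F x) (fclass L imp F y) = fclass L imp F (mult x y) \<and>
            qop L imp F imp (fclass L imp F x) (fclass L imp F y) = fclass L imp F (imp x y))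
         \<and> residuated_lattice (quot L imp F) (qop L imp F join) (qop L imp F meet)
             (fclass L imp F bt) (qop L imp F imp) (qop L imp F mult) (fclass L imp F e)"
proof -
  interpret il_filter L join meet bt imp mult e F
    using assms unfolding affine_filter_def by unfold_locales auto
  have "imp (imp bt bt) e \<in> F"
    using assms(2) unfolding affine_filter_def by simp
  then show ?thesis
    unfolding residuated_lattice_def
    by (simp add: lift_join lift_meet lift_mult lift_imp fclass_in_quot quot_is_lattice
        quot_bot_least quot_unit_greatest quot_comm_monoid quot_residuated)
qed

end
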